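(* For every positive integer $k$, $$2^k-1\le a_k\le 2^{k+n_k}-2^{\mu_2(k)}.$$
   Context: For a positive integer $k$, $a_k$ denotes the smallest positive multiple of $k$ whose sum of binary (base $2$) digits equals $k$. $n_k=\lceil\log_2 k\rceil$ and $\mu_2(k)$ is the largest $\alpha\ge0$ with $2^\alpha\mid k$. *)

theory Defs
  imports "HOL-Computational_Algebra.Computational_Algebra"
begin

fun bin_digit_sum :: "nat \<Rightarrow> nat" where
  "bin_digit_sum n = (if n = 0 then 0 else n mod 2 + bin_digit_sum (n div 2))"

declare bin_digit_sum.simps[simp del]

definition a_seq :: "nat \<Rightarrow> nat" where
  "a_seq k = (LEAST m. 0 < m \<and> k dvd m \<and> bin_digit_sum m = k)"

definition n_seq :: "nat \<Rightarrow> nat" where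
  "n_seq k = nat \<lceil>log 2 (real k)\<rceil>"

definition mu2 :: "nat \<Rightarrow> nat" where
  "mu2 k = multiplicity (2::nat) k"

end

theory Submission imports Defs "HOL-Number_Theory.Number_Theory" begin

(* Lower bound: any m with digit sum s satisfies 2^s <= m + 1, so a_k >= 2^k - 1.

   Upper bound: write k = 2^mu * q with q odd and put e = n_k - mu, so that
   q <= 2^e < 2q.  Euler's theorem gives an exponent m with 2^m = 2 (mod q) and
   e <= m <= k.  For y = 2^e (2^k - 1) mod q the "block number"
     y + 2^e * (2^k - 1 - 2^(m-e) * y)
   is a multiple of q below 2^(k+e) whose digit sum is exactly k, because the
   second summand is the bitwise complement of a shifted copy of y.  Multiplying
   by 2^mu gives a multiple of k with digit sum k below 2^(k+n_k) - 2^mu. *)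

lemma bin_digit_sum_0 [simp]: "bin_digit_sum 0 = 0"
  by (simp add: bin_digit_sum.simps)

lemma bin_digit_sum_step: "bin_digit_sum n = n mod 2 + bin_digit_sum (n div 2)"
  by (cases "n = 0") (simp_all add: bin_digit_sum.simps[of n])

lemma bin_digit_sum_digit: "a < 2 \<Longrightarrow> bin_digit_sum (a + 2 * b) = a + bin_digit_sum b"
  by (subst bin_digit_sum_step) simp

lemma bin_digit_sum_pow2_mult: "bin_digit_sum (2 ^ j * x) = bin_digit_sum x"
  by (induction j) (auto simp: bin_digit_sum_digit[of 0, simplified] mult.assoc)

lemma bin_digit_sum_concat:
  "a < 2 ^ j \<Longrightarrow> bin_digit_sum (a + 2 ^ j * b) = bin_digit_sum a + bin_digit_sum b"
proof (induction j arbitrary: a)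
  case 0
  then show ?case by simp
next
  case (Suc j)
  have split: "a + 2 ^ Suc j * b = a mod 2 + 2 * (a div 2 + 2 ^ j * b)" by simp
  have "bin_digit_sum (a + 2 ^ Suc j * b) = a mod 2 + bin_digit_sum (a div 2 + 2 ^ j * b)"
    by (subst split, rule bin_digit_sum_digit) simp
  also have "\<dots> = a mod 2 + bin_digit_sum (a div 2) + bin_digit_sum b"
    using Suc by simp
  also have "\<dots> = bin_digit_sum a + bin_digit_sum b"
    by (simp add: bin_digit_sum_step[of a])
  finally show ?case .
qed

lemma bin_digit_sum_complement:
  "x < 2 ^ s \<Longrightarrow> bin_digit_sum x + bin_digit_sum (2 ^ s - 1 - x) = s"
proof (induction s arbitrary: x)
  case 0
  then show ?case by simp
next
  case (Suc s)
  have half: "x div 2 < 2 ^ s" using Suc.prems by simp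
  have "x = x mod 2 + 2 * (x div 2)" "x mod 2 \<le> 1" by simp_all
  then have "2 ^ Suc s - 1 - x = (1 - x mod 2) + 2 * (2 ^ s - 1 - x div 2)"
    using half unfolding power_Suc by linarith
  then have "bin_digit_sum (2 ^ Suc s - 1 - x) = (1 - x mod 2) + bin_digit_sum (2 ^ s - 1 - x div 2)"
    using bin_digit_sum_digit[of "1 - x mod 2"] by simp
  then show ?case using Suc.IH[OF half] bin_digit_sum_step[of x] by linarith
qed

lemma two_pow_bin_digit_sum_le: "2 ^ bin_digit_sum m \<le> m + 1"
proof (induction m rule: less_induct)
  case (less m)
  show ?case
  proof (cases "m = 0")
    case False
    have IH: "2 ^ bin_digit_sum (m div 2) \<le> m div 2 + 1" using less False by simp
    have "m mod 2 = 0 \<or> m mod 2 = 1" by auto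
    then show ?thesis
    proof
      assume "m mod 2 = 0"
      then show ?thesis using IH bin_digit_sum_step[of m] by simp
    next
      assume odd: "m mod 2 = 1"
      then have "m = 1 + 2 * (m div 2)" by (metis div_mult_mod_eq add.commute mult.commute)
      then show ?thesis using IH odd bin_digit_sum_step[of m] by simp
    qed
  qed simp
qed

text \<open>For \<open>y < 2^e\<close>, the number consisting of \<open>y\<close> in the lowest \<open>e\<close> bits followed by the
  \<open>s\<close>-bit complement of \<open>2^(m-e) * y\<close>.\<close>
definition block_number :: "nat \<Rightarrow> nat \<Rightarrow> nat \<Rightarrow> nat \<Rightarrow> nat" where
  "block_number e s m y = y + 2 ^ e * (2 ^ s - 1 - 2 ^ (m - e) * y)"

lemma shifted_less:
  assumes "y < 2 ^ e" "e \<le> m" "m \<le> s"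
  shows "2 ^ (m - e) * y < (2::nat) ^ s"
proof -
  have "2 ^ (m - e) * y < 2 ^ (m - e) * 2 ^ e" using assms(1) by simp
  also have "\<dots> = 2 ^ m" using assms(2) by (simp flip: power_add)
  also have "\<dots> \<le> 2 ^ s" using assms(3) by simp
  finally show ?thesis .
qed

lemma bin_digit_sum_block_number:
  assumes "y < 2 ^ e" "e \<le> m" "m \<le> s"
  shows "bin_digit_sum (block_number e s m y) = s"
proof -
  have "bin_digit_sum (2 ^ (m - e) * y) + bin_digit_sum (2 ^ s - 1 - 2 ^ (m - e) * y) = s"
    by (rule bin_digit_sum_complement[OF shifted_less[OF assms]])
  then show ?thesis
    unfolding block_number_def bin_digit_sum_concat[OF assms(1)] bin_digit_sum_pow2_mult .
qed

lemma block_number_less: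
  assumes "y < 2 ^ e"
  shows "block_number e s m y < 2 ^ (s + e)"
proof -
  have "block_number e s m y < 2 ^ e + 2 ^ e * (2 ^ s - 1)"
    unfolding block_number_def using assms by (intro add_less_le_mono) auto
  also have "\<dots> = 2 ^ (s + e)"
    by (simp add: power_add algebra_simps)
  finally show ?thesis .
qed

text \<open>Adding back the shifted copy of \<open>y\<close> completes the all-ones block.\<close>
lemma block_number_identity:
  assumes "y < 2 ^ e" "e \<le> m" "m \<le> s"
  shows "block_number e s m y + y * 2 ^ m = y + 2 ^ e * (2 ^ s - 1)"
proof -
  have shift: "2 ^ e * (2 ^ (m - e) * y) = y * 2 ^ m"
    using assms(2) by (simp flip: power_add add: mult.commute)
  have "2 ^ (m - e) * y \<le> 2 ^ s - 1" using shifted_less[OF assms] by simp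
  then have "2 ^ e * (2 ^ s - 1 - 2 ^ (m - e) * y) + 2 ^ e * (2 ^ (m - e) * y) = 2 ^ e * (2 ^ s - 1)"
    by (simp flip: add_mult_distrib2)
  then show ?thesis unfolding block_number_def shift by simp
qed

lemma multiple_with_digit_sum:
  fixes q s e m :: nat
  assumes "0 < q" "q \<le> 2 ^ e" "[2 ^ m = 2] (mod q)" "e \<le> m" "m \<le> s"
  shows "\<exists>M. q dvd M \<and> bin_digit_sum M = s \<and> M < 2 ^ (s + e)"
proof -
  define y where "y = (2 ^ e * (2 ^ s - 1)) mod q"
  have y_less: "y < 2 ^ e" unfolding y_def using assms(1,2) by (meson mod_less_divisor order_less_le_trans)
  define M where "M = block_number e s m y"
  have "[M + y * 2 ^ m = y + y] (mod q)"
    unfolding M_def block_number_identity[OF y_less assms(4,5)]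
    by (simp add: y_def cong_def mod_add_right_eq)
  moreover have "[y * 2 ^ m = y * 2] (mod q)"
    by (rule cong_mult[OF cong_refl assms(3)])
  ultimately have "[M + y * 2 ^ m = 0 + y * 2 ^ m] (mod q)"
    by (simp add: cong_def mult_2_right)
  then have "q dvd M"
    unfolding cong_add_rcancel_nat by (simp add: cong_0_iff)
  then show ?thesis
    unfolding M_def using bin_digit_sum_block_number[OF y_less assms(4,5)] block_number_less[OF y_less]
    by blast
qed

lemma n_seq_bounds:
  assumes "0 < k"
  shows "k \<le> 2 ^ n_seq k \<and> 2 ^ n_seq k < 2 * k"
proof -
  define c where "c = \<lceil>log 2 (real k)\<rceil>"
  have "log 2 (real k) \<ge> 0" using assms by simp
  then have "c \<ge> 0" unfolding c_def by linarith
  then have "real (n_seq k) = real_of_int c" unfolding n_seq_def c_def[symmetric] by simp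
  then have pow: "(2::real) ^ n_seq k = 2 powr real_of_int c"
    using powr_realpow[of 2 "n_seq k"] by simp
  have "real k = 2 powr (log 2 (real k))" using assms by simp
  also have "\<dots> \<le> 2 powr real_of_int c" unfolding c_def by (rule powr_mono) auto
  finally have lower: "real k \<le> 2 ^ n_seq k" using pow by simp
  have "2 powr real_of_int c < 2 powr (log 2 (real k) + 1)"
    unfolding c_def by (rule powr_less_mono) (linarith, simp)
  also have "\<dots> = 2 * real k" using assms by (simp add: powr_add)
  finally have upper: "(2::real) ^ n_seq k < 2 * real k" using pow by simp
  from lower upper show ?thesis
    by (metis of_nat_less_iff of_nat_le_iff of_nat_numeral of_nat_power of_nat_mult)
qed

lemma odd_part_bounds:
  assumes "0 < k"
  obtains q where "k = 2 ^ mu2 k * q" "odd q" "0 < q" "mu2 k \<le> n_seq k"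
    "q \<le> 2 ^ (n_seq k - mu2 k)" "2 ^ (n_seq k - mu2 k) < 2 * q"
proof -
  obtain q where k: "k = 2 ^ mu2 k * q" and odd: "odd q"
    using multiplicity_decompose'[of k "2::nat"] assms unfolding mu2_def by auto
  have "0 < q" using k assms by (cases "q = 0") auto
  have n: "k \<le> 2 ^ n_seq k" "2 ^ n_seq k < 2 * k" using n_seq_bounds[OF assms] by auto
  have "(2::nat) ^ mu2 k * 1 \<le> 2 ^ mu2 k * q" using \<open>0 < q\<close> by (intro mult_le_mono2) simp
  then have "(2::nat) ^ mu2 k \<le> k" using k by simp
  then have "(2::nat) ^ mu2 k \<le> 2 ^ n_seq k" using n(1) by linarith
  then have mu_le: "mu2 k \<le> n_seq k" by simp
  then have split: "(2::nat) ^ n_seq k = 2 ^ mu2 k * 2 ^ (n_seq k - mu2 k)"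
    by (simp flip: power_add)
  have "2 ^ mu2 k * q \<le> 2 ^ mu2 k * 2 ^ (n_seq k - mu2 k)"
    using n(1) unfolding split by (subst (asm) k)
  then have "q \<le> 2 ^ (n_seq k - mu2 k)" by simp
  moreover have "2 ^ mu2 k * 2 ^ (n_seq k - mu2 k) < 2 ^ mu2 k * (2 * q)"
    using n(2) unfolding split by (subst (asm) (2) k) simp
  then have "2 ^ (n_seq k - mu2 k) < 2 * q" by simp
  ultimately show ?thesis using that[OF k odd \<open>0 < q\<close> mu_le] by blast
qed

text \<open>For odd \<open>q\<close>, Euler's theorem gives \<open>q | 2^\<phi>(q) - 1\<close>, hence \<open>q < 2^\<phi>(q)\<close>.\<close>
lemma odd_less_two_pow_totient:
  fixes q :: nat
  assumes "odd q"
  shows "q < 2 ^ totient q"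
proof -
  have "[2 ^ totient q = 1] (mod q)" using assms by (intro euler_theorem) simp
  then have "q dvd 2 ^ totient q - 1"
    using cong_diff_iff_cong_0_nat[of 1 "2 ^ totient q" q] by (simp add: cong_0_iff)
  moreover have "0 < totient q" using assms by (simp add: odd_pos)
  then have pow_gt_1: "(1::nat) < 2 ^ totient q" by (intro one_less_power) simp_all
  then have "(0::nat) < 2 ^ totient q - 1" by simp
  ultimately have "q \<le> 2 ^ totient q - 1" by (rule dvd_imp_le)
  then show ?thesis using pow_gt_1 by linarith
qed

text \<open>For odd \<open>q \<le> k\<close> with \<open>2^e < 2q\<close> there is an exponent \<open>m\<close> with
  \<open>2^m \<equiv> 2 (mod q)\<close> and \<open>e \<le> m \<le> k\<close>; for \<open>q > 1\<close> take \<open>m = \<phi>(q) + 1\<close>.\<close>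
lemma exponent_congruent_two:
  fixes q e k :: nat
  assumes "odd q" "2 ^ e < 2 * q" "q \<le> k"
  shows "\<exists>m. [2 ^ m = 2] (mod q) \<and> e \<le> m \<and> m \<le> k"
proof (cases "q = 1")
  case True
  then have "e = 0" using assms(2) by (cases e) auto
  then show ?thesis using True assms(3) by (intro exI[of _ 1]) simp
next
  case False
  then have "1 < q" using assms(1) by (cases q) auto
  define t where "t = totient q"
  have "[2 ^ t * 2 = 1 * 2] (mod q)"
    unfolding t_def using assms(1) by (intro cong_mult euler_theorem) simp_all
  then have cong: "[2 ^ (t + 1) = 2] (mod q)" by (simp add: mult.commute)
  have "t + 1 \<le> k" unfolding t_def using totient_less[OF \<open>1 < q\<close>] assms(3) by simp
  moreover have "(2::nat) ^ e < 2 ^ (t + 1)"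
    using assms(2) odd_less_two_pow_totient[OF assms(1)] unfolding t_def by simp
  then have "e \<le> t + 1" by (simp only: power_strict_increasing_iff)
  ultimately show ?thesis using cong by blast
qed

lemma multiple_with_digit_sum_k:
  assumes "0 < k"
  shows "\<exists>A. 0 < A \<and> k dvd A \<and> bin_digit_sum A = k \<and> A \<le> 2 ^ (k + n_seq k) - 2 ^ mu2 k"
proof -
  define \<mu> n where "\<mu> = mu2 k" and "n = n_seq k"
  obtain q where k: "k = 2 ^ \<mu> * q" and q: "odd q" "0 < q" "\<mu> \<le> n"
    "q \<le> 2 ^ (n - \<mu>)" "2 ^ (n - \<mu>) < 2 * q"
    using odd_part_bounds[OF assms] unfolding \<mu>_def n_def .
  have "q \<le> k" using k by simp
  then obtain m where m: "[2 ^ m = 2] (mod q)" "n - \<mu> \<le> m" "m \<le> k"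
    using exponent_congruent_two[OF q(1,5)] by blast
  obtain M where M: "q dvd M" "bin_digit_sum M = k" "M < 2 ^ (k + (n - \<mu>))"
    using multiple_with_digit_sum[OF q(2,4) m] by blast
  define A where "A = 2 ^ \<mu> * M"
  have digits: "bin_digit_sum A = k" unfolding A_def bin_digit_sum_pow2_mult by (rule M(2))
  then have "0 < A" using assms by (cases "A = 0") auto
  moreover have "k dvd A" unfolding A_def k using M(1) by simp
  moreover have "A \<le> 2 ^ \<mu> * (2 ^ (k + (n - \<mu>)) - 1)" unfolding A_def using M(3) by simp
  then have "A \<le> 2 ^ (k + n) - 2 ^ \<mu>"
    using q(3) by (simp add: right_diff_distrib' flip: power_add)
  ultimately show ?thesis using digits unfolding \<mu>_def n_def by blast
qed

lemma a_seq_bounds_from_witness: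
  assumes "0 < A" "k dvd A" "bin_digit_sum A = k"
  shows "2 ^ k - 1 \<le> a_seq k \<and> a_seq k \<le> A"
proof -
  have "a_seq k \<le> A" unfolding a_seq_def by (rule Least_le) (use assms in blast)
  moreover have "bin_digit_sum (a_seq k) = k"
    unfolding a_seq_def by (rule LeastI2[of _ A]) (use assms in auto)
  then have "2 ^ k \<le> a_seq k + 1" using two_pow_bin_digit_sum_le[of "a_seq k"] by simp
  ultimately show ?thesis by simp
qed

theorem mainTheorem3:
  fixes k :: nat
  assumes "0 < k"
  shows "2 ^ k - 1 \<le> a_seq k \<and> a_seq k \<le> 2 ^ (k + n_seq k) - 2 ^ mu2 k"
proof -
  obtain A where A: "0 < A" "k dvd A" "bin_digit_sum A = k"
    and A_le: "A \<le> 2 ^ (k + n_seq k) - 2 ^ mu2 k"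
    using multiple_with_digit_sum_k[OF assms] by blast
  show ?thesis using a_seq_bounds_from_witness[OF A] A_le by simp
qed

end
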